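(* Let $U$ be a unicyclic graph and let $e$ be any edge of $\operatorname{Cycles}(U)$. If $\tau$ is a t-switch in the tree $U-e$ between edges $ab,cd$ of $\operatorname{Forest}(U)$, then $e\notin E(\tau(U-e))$.
   Context: Graphs are finite, simple, undirected, labeled. A unicyclic graph is a connected graph with exactly one cycle. For vertices $a,b,c,d$, $A=\binom{a\ b}{c\ d}$ is interchangeable in $G$ if $ab,cd\in E(G)$, $\{a,b\}\cap\{c,d\}=\varnothing$, $ac,bd\notin E(G)$; the 2-switch $\tau_A$ sends $G$ to $G-ab-cd+ac+bd$ if $A$ is interchangeable and to $G$ otherwise (trivial). A 2-switch between edges $ab$ and $cd$ is $\tau_A$ with $A=\binom{a\ b}{c\ d}$. A nontrivial 2-switch $\tau$ over a tree $T$ is a t-switch if $\tau(T)$ is a tree. $\operatorname{Cycles}(G)$ is the subgraph induced by vertices lying on some cycle; $\operatorname{Forest}(G)=G-E(\operatorname{Cycles}(G))$. *)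

theory Defs
  imports Main
begin

definition simple_graph :: "'a set \<Rightarrow> 'a set set \<Rightarrow> bool" where
  "simple_graph V E \<longleftrightarrow> finite V \<and> (\<forall>e\<in>E. \<exists>x y. e = {x, y} \<and> x \<noteq> y \<and> x \<in> V \<and> y \<in> V)"

definition adj_rel :: "'a set set \<Rightarrow> ('a \<times> 'a) set" where
  "adj_rel E = {(x, y). {x, y} \<in> E}"

definition connected_graph :: "'a set \<Rightarrow> 'a set set \<Rightarrow> bool" where
  "connected_graph V E \<longleftrightarrow> V \<noteq> {} \<and> (\<forall>x\<in>V. \<forall>y\<in>V. (x, y) \<in> (adj_rel E)\<^sup>*)"

definition cycle_edges :: "'a list \<Rightarrow> 'a set set" where
  "cycle_edges vs = {{vs ! i, vs ! ((i + 1) mod length vs)} | i. i < length vs}"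

definition is_cycle :: "'a set set \<Rightarrow> 'a set set \<Rightarrow> bool" where
  "is_cycle E C \<longleftrightarrow> (\<exists>vs. length vs \<ge> 3 \<and> distinct vs \<and> C = cycle_edges vs \<and> C \<subseteq> E)"

definition tree :: "'a set \<Rightarrow> 'a set set \<Rightarrow> bool" where
  "tree V E \<longleftrightarrow> simple_graph V E \<and> connected_graph V E \<and> \<not> (\<exists>C. is_cycle E C)"

definition unicyclic :: "'a set \<Rightarrow> 'a set set \<Rightarrow> bool" where
  "unicyclic V E \<longleftrightarrow> simple_graph V E \<and> connected_graph V E \<and> (\<exists>!C. is_cycle E C)"

text \<open>Vertices lying on some cycle; Cycles(G) is the subgraph induced by them.\<close>
definition cycle_vertices :: "'a set set \<Rightarrow> 'a set" where
  "cycle_vertices E = \<Union>{\<Union>C | C. is_cycle E C}"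

definition cycles_edges :: "'a set set \<Rightarrow> 'a set set" where
  "cycles_edges E = {e \<in> E. e \<subseteq> cycle_vertices E}"

definition forest_edges :: "'a set set \<Rightarrow> 'a set set" where
  "forest_edges E = E - cycles_edges E"

definition interchangeable :: "'a set set \<Rightarrow> 'a \<Rightarrow> 'a \<Rightarrow> 'a \<Rightarrow> 'a \<Rightarrow> bool" where
  "interchangeable E a b c d \<longleftrightarrow>
     {a, b} \<in> E \<and> {c, d} \<in> E \<and> {a, b} \<inter> {c, d} = {} \<and> {a, c} \<notin> E \<and> {b, d} \<notin> E"

definition two_switch :: "'a \<Rightarrow> 'a \<Rightarrow> 'a \<Rightarrow> 'a \<Rightarrow> 'a set set \<Rightarrow> 'a set set" where
  "two_switch a b c d E =
     (if interchangeable E a b c d then (E - {{a, b}, {c, d}}) \<union> {{a, c}, {b, d}} else E)"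

definition t_switch :: "'a set \<Rightarrow> 'a set set \<Rightarrow> 'a \<Rightarrow> 'a \<Rightarrow> 'a \<Rightarrow> 'a \<Rightarrow> bool" where
  "t_switch V T a b c d \<longleftrightarrow> tree V T \<and> interchangeable T a b c d \<and> tree V (two_switch a b c d T)"

end

theory Submission
  imports Defs
begin

text \<open>A 2-switch deletes at most the edges ab and cd, and these lie in Forest(U), hence on no
cycle of U. So if e were an edge of the switched graph, the cycle of U would survive in it,
contradicting that a t-switch produces a tree.\<close>

lemma is_cycle_mono: "is_cycle E C \<Longrightarrow> C \<subseteq> F \<Longrightarrow> is_cycle F C"
  unfolding is_cycle_def by blast

lemma is_cycle_subset_cycles_edges: "is_cycle E C \<Longrightarrow> C \<subseteq> cycles_edges E"
  unfolding cycles_edges_def cycle_vertices_def is_cycle_def by blast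

lemma is_cycle_disjoint_forest_edges: "is_cycle E C \<Longrightarrow> C \<inter> forest_edges E = {}"
  using is_cycle_subset_cycles_edges unfolding forest_edges_def by blast

lemma two_switch_keeps_other_edges: "E - {{a, b}, {c, d}} \<subseteq> two_switch a b c d E"
  unfolding two_switch_def by auto

lemma tree_no_cycle: "tree V T \<Longrightarrow> \<not> is_cycle T C"
  unfolding tree_def by blast

lemma is_cycle_two_switch:
  assumes "is_cycle E C" and "{a, b} \<notin> C" and "{c, d} \<notin> C"
    and "E \<subseteq> insert e T" and "e \<in> two_switch a b c d T"
  shows "is_cycle (two_switch a b c d T) C"
proof (rule is_cycle_mono[OF \<open>is_cycle E C\<close>])
  have "C \<subseteq> E" using assms(1) unfolding is_cycle_def by blast
  then show "C \<subseteq> two_switch a b c d T"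
    using assms(2-5) two_switch_keeps_other_edges[of T a b c d] by blast
qed

theorem lemma2p2:
  fixes V :: "'a set" and E :: "'a set set" and e :: "'a set" and a b c d :: 'a
  assumes "unicyclic V E"
    and "e \<in> cycles_edges E"
    and "t_switch V (E - {e}) a b c d"
    and "{a, b} \<in> forest_edges E" and "{c, d} \<in> forest_edges E"
  shows "e \<notin> two_switch a b c d (E - {e})"
proof
  assume e_kept: "e \<in> two_switch a b c d (E - {e})"
  obtain C where C: "is_cycle E C"
    using assms(1) unfolding unicyclic_def by blast
  have "{a, b} \<notin> C" and "{c, d} \<notin> C"
    using is_cycle_disjoint_forest_edges[OF C] assms(4,5) by blast+
  then have "is_cycle (two_switch a b c d (E - {e})) C"
    using is_cycle_two_switch[OF C _ _ _ e_kept] by blast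
  moreover have "tree V (two_switch a b c d (E - {e}))"
    using assms(3) unfolding t_switch_def by blast
  ultimately show False
    using tree_no_cycle by blast
qed

end
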